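(* Let $L$ be a finite extension of the semifield $\mathbb{B}$. Then $L=\mathbb{B}$ (the embedding $\mathbb{B}\to L$ is surjective).
   Context: $\mathbb{B}=\{0,1\}$ is the semifield with $x+0=0+x=x$, $1+1=1$, and the obvious multiplication. A semifield is a commutative semiring in which every nonzero element is a unit. An extension of a semifield $K$ is a semifield $L$ with an injective homomorphism $K\to L$; it is finite if $L$ is a finitely generated $K$-semimodule. *)

theory Defs
  imports Main
begin

text \<open>The Boolean semifield B = {0,1} is modelled on the type bool:
  0 = False, 1 = True, addition = disjunction (so 1+1 = 1),
  multiplication = conjunction.\<close>

text \<open>A semifield: a commutative semiring (with 0 \<noteq> 1, built into
  comm_semiring_1) in which every nonzero element is a unit.\<close>
definition is_semifield :: "'a::comm_semiring_1 itself \<Rightarrow> bool" where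
  "is_semifield _ \<longleftrightarrow> (\<forall>x::'a. x \<noteq> 0 \<longrightarrow> (\<exists>y. x * y = 1))"

definition B_hom :: "(bool \<Rightarrow> 'a::comm_semiring_1) \<Rightarrow> bool" where
  "B_hom f \<longleftrightarrow> f False = 0 \<and> f True = 1 \<and>
     (\<forall>x y. f (x \<or> y) = f x + f y) \<and> (\<forall>x y. f (x \<and> y) = f x * f y)"

definition B_extension :: "(bool \<Rightarrow> 'a::comm_semiring_1) \<Rightarrow> bool" where
  "B_extension f \<longleftrightarrow> B_hom f \<and> inj f"

text \<open>L is finitely generated as a B-semimodule, where B acts on L by
  b \<cdot> x = f b * x.\<close>
definition B_finite :: "(bool \<Rightarrow> 'a::comm_semiring_1) \<Rightarrow> bool" where
  "B_finite f \<longleftrightarrow> (\<exists>S::'a set. finite S \<and>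
     (\<forall>x. \<exists>c::'a \<Rightarrow> bool. x = (\<Sum>s\<in>S. f (c s) * s)))"

end

theory Submission
  imports Defs
begin

text \<open>Since 1 + 1 = 1, addition in L is idempotent, so L is zero-sum-free, and as a
  finitely generated B-semimodule L is finite: every element is the sum of a subset
  of the generators. Multiplication by a unit u permutes the finite set L, hence
  fixes the sum z of all its elements; z contains the summand 1, so z \<noteq> 0 and z is
  itself a unit. Cancelling z in u z = z gives u = 1, so L = {0, 1}.\<close>

lemma add_idem_if_one_add_one:
  fixes a :: "'a::comm_semiring_1"
  assumes "1 + 1 = (1::'a)"
  shows "a + a = a"
proof -
  have "a + a = a * (1 + 1)" by (simp only: distrib_left mult_1_right)
  with assms show ?thesis by simp
qed

lemma zero_sum_free_if_add_idem:
  fixes a b :: "'a::monoid_add"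
  assumes "a + a = a" and "a + b = 0"
  shows "a = 0"
proof -
  have "a = a + (a + b)" using assms(2) by simp
  also have "\<dots> = (a + a) + b" by (simp add: add.assoc)
  finally show ?thesis using assms by simp
qed

lemma finite_UNIV_if_B_finite:
  fixes f :: "bool \<Rightarrow> 'a::comm_semiring_1"
  assumes "B_hom f" and "B_finite f"
  shows "finite (UNIV :: 'a set)"
proof -
  obtain S :: "'a set" where S: "finite S" "\<And>x. \<exists>c. x = (\<Sum>s\<in>S. f (c s) * s)"
    using assms(2) unfolding B_finite_def by blast
  have "UNIV \<subseteq> sum id ` Pow S"
  proof
    fix x :: 'a
    obtain c where c: "x = (\<Sum>s\<in>S. f (c s) * s)" using S(2) by blast
    have "x = (\<Sum>s\<in>S. if c s then s else 0)"
      unfolding c using assms(1) by (intro sum.cong) (auto simp: B_hom_def)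
    also have "\<dots> = sum id {s\<in>S. c s}"
      using S(1) by (simp add: sum.inter_filter)
    finally show "x \<in> sum id ` Pow S" by blast
  qed
  then show ?thesis by (rule finite_surj[rotated]) (simp add: S(1))
qed

lemma sum_UNIV_neq_zero:
  assumes "finite (UNIV :: 'a::{comm_monoid_add, zero_neq_one} set)"
    and "\<And>a b :: 'a. a + b = 0 \<Longrightarrow> a = 0"
  shows "(\<Sum>x\<in>UNIV. x :: 'a) \<noteq> 0"
proof
  assume "(\<Sum>x\<in>UNIV. x :: 'a) = 0"
  moreover have "(\<Sum>x\<in>UNIV. x) = 1 + (\<Sum>x\<in>UNIV - {1::'a}. x)"
    by (rule sum.remove[OF assms(1)]) simp
  ultimately show False using assms(2) by (metis zero_neq_one)
qed

lemma mult_sum_UNIV_if_unit: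
  fixes u v :: "'a::comm_semiring_1"
  assumes "finite (UNIV :: 'a set)" and "u * v = 1"
  shows "u * (\<Sum>x\<in>UNIV. x) = (\<Sum>x\<in>UNIV. x)"
proof -
  have inj: "inj ((*) u)"
  proof (rule injI)
    fix a b :: 'a
    assume "u * a = u * b"
    then have "v * (u * a) = v * (u * b)" by simp
    then have "(u * v) * a = (u * v) * b" by (simp add: ac_simps)
    with assms(2) show "a = b" by simp
  qed
  then have "range ((*) u) = UNIV"
    using assms(1) finite_UNIV_inj_surj by blast
  have "u * (\<Sum>x\<in>UNIV. x) = (\<Sum>x\<in>UNIV. u * x)" by (simp add: sum_distrib_left)
  also have "\<dots> = (\<Sum>x\<in>range ((*) u). x)"
    using sum.reindex[OF inj, of id] by simp
  also have "\<dots> = (\<Sum>x\<in>UNIV. x)" using \<open>range ((*) u) = UNIV\<close> by simp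
  finally show ?thesis .
qed

lemma eq_one_if_finite_zero_sum_free_semifield:
  fixes u :: "'a::comm_semiring_1"
  assumes "is_semifield TYPE('a)" and "finite (UNIV :: 'a set)"
    and "\<And>a b :: 'a. a + b = 0 \<Longrightarrow> a = 0" and "u \<noteq> 0"
  shows "u = 1"
proof -
  define z where "z = (\<Sum>x\<in>UNIV. x :: 'a)"
  obtain v where "u * v = 1" using assms(1,4) unfolding is_semifield_def by blast
  with assms(2) have uz: "u * z = z" unfolding z_def by (rule mult_sum_UNIV_if_unit)
  have "z \<noteq> 0" unfolding z_def using assms(2,3) by (rule sum_UNIV_neq_zero)
  then obtain w where w: "z * w = 1" using assms(1) unfolding is_semifield_def by blast
  have "u = u * (z * w)" using w by simp
  also have "\<dots> = z * w" using uz by (simp add: mult.assoc[symmetric])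
  finally show ?thesis using w by simp
qed

theorem mainTheorem10:
  fixes f :: "bool \<Rightarrow> 'a::comm_semiring_1"
  assumes "is_semifield TYPE('a)"
    and "B_extension f"
    and "B_finite f"
  shows "surj f"
proof -
  have hom: "B_hom f" using assms(2) by (simp add: B_extension_def)
  then have f0: "f False = 0" and f1: "f True = 1" by (auto simp: B_hom_def)
  have "f (True \<or> True) = f True + f True" using hom unfolding B_hom_def by blast
  then have "1 + 1 = (1::'a)" using f1 by simp
  then have zero_sum_free: "a + b = 0 \<Longrightarrow> a = 0" for a b :: 'a
    by (metis add_idem_if_one_add_one zero_sum_free_if_add_idem)
  have fin: "finite (UNIV :: 'a set)" using hom assms(3) by (rule finite_UNIV_if_B_finite)
  show ?thesis
  proof (rule surjI[where f = "\<lambda>x. x \<noteq> 0"])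
    fix x :: 'a
    show "f (x \<noteq> 0) = x"
      using eq_one_if_finite_zero_sum_free_semifield[OF assms(1) fin zero_sum_free, where u = x] f0 f1
      by (cases "x = 0") auto
  qed
qed

end
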